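(* Let $m\ge1$, let $B_1,B_2$ be balls in $\mathbb{R}^m/\mathbb{Z}^m$ and let $r,q\in\mathbb{Z}\setminus\{0\}$. Then \[ |A_{1,m}(r,B_1)\cap A_{1,m}(q,B_2)|\le 2^m\Bigl(|B_1||B_2|+|B_2|\,|q|^{-m}\gcd(r,q)^m\Bigr). \]
   Context: Balls are max-norm balls in $\mathbb{R}^m/\mathbb{Z}^m$ and $|\cdot|$ is Lebesgue measure. For $q\in\mathbb{Z}$ and a ball $B$, $A_{1,m}(q,B)=\{\mathbf{x}\in[0,1]^m: q\mathbf{x}+\mathbf{p}\in B\text{ for some }\mathbf{p}\in\mathbb{Z}^m\}$. *)

theory Defs
  imports "HOL-Analysis.Analysis"
begin

definition int_vec :: "real ^ 'm \<Rightarrow> bool" where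
  "int_vec p \<longleftrightarrow> (\<forall>i. p $ i \<in> \<int>)"

text \<open>The open max-norm ball of centre c and radius rho in the torus R^m/Z^m,
  represented by its (Z^m-periodic) preimage in R^m.\<close>
definition torus_ball :: "real ^ 'm \<Rightarrow> real \<Rightarrow> (real ^ 'm) set" where
  "torus_ball c \<rho> = {y. \<exists>p. int_vec p \<and> (\<forall>i. \<bar>y $ i + p $ i - c $ i\<bar> < \<rho>)}"

text \<open>Haar (Lebesgue) measure on the torus of a periodic set: measure of its
  intersection with the fundamental domain [0,1)^m.\<close>
definition torus_measure :: "(real ^ 'm) set \<Rightarrow> real" where
  "torus_measure S = measure lebesgue (S \<inter> {x. \<forall>i. 0 \<le> x $ i \<and> x $ i < 1})"

definition A1 :: "int \<Rightarrow> (real ^ 'm) set \<Rightarrow> (real ^ 'm) set" where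
  "A1 q B = {x. (\<forall>i. 0 \<le> x $ i \<and> x $ i \<le> 1) \<and>
                 (\<exists>p. int_vec p \<and> of_int q *\<^sub>R x + p \<in> B)}"

end

theory Submission
  imports Defs
begin

text \<open>
  Torus balls and the sets \<open>A\<^sub>1\<^sub>,\<^sub>m(q, B)\<close> are products of one-dimensional sets, so the
  measure factorises over the coordinates and it suffices to show, with \<open>g = gcd r q\<close>,
  \<open>|{t \<in> [0,1] : rt \<in> B\<^sub>1, qt \<in> B\<^sub>2}| \<le> (|B\<^sub>1| + g/|q|) |B\<^sub>2|\<close> on the circle;
  the inequality \<open>(a + b)\<^sup>m \<le> 2\<^sup>m (a\<^sup>m + b\<^sup>m)\<close> then gives the theorem.
  For \<open>q > 0\<close>, substituting \<open>y = qt\<close> and cutting \<open>[0,q)\<close> into unit intervals turns the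
  one-dimensional measure into \<open>1/q\<close> times the integral over \<open>x \<in> [0,1) \<inter> B\<^sub>2\<close> of
  \<open>#{j < q : r(x + j)/q \<in> B\<^sub>1}\<close>. The points \<open>rj/q\<close> mod 1 run through the subgroup
  \<open>(g/q)\<int>/\<int>\<close>, each point \<open>g\<close> times, so an arc of length \<open>|B\<^sub>1|\<close> contains at most
  \<open>q|B\<^sub>1| + g\<close> of them.
\<close>

definition circle_ball :: "real \<Rightarrow> real \<Rightarrow> real set" where
  "circle_ball c \<rho> = {y. \<exists>n::int. \<bar>y + of_int n - c\<bar> < \<rho>}"

definition circle_ball_length :: "real \<Rightarrow> real" where
  "circle_ball_length \<rho> = (if \<rho> \<le> 0 then 0 else min (2 * \<rho>) 1)"

definition A1_circle :: "int \<Rightarrow> real \<Rightarrow> real \<Rightarrow> real set" where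
  "A1_circle q c \<rho> = {t \<in> {0..1}. of_int q * t \<in> circle_ball c \<rho>}"

lemma circle_ball_length_nonneg: "circle_ball_length \<rho> \<ge> 0"
  by (simp add: circle_ball_length_def)

lemma circle_ball_empty: "\<rho> \<le> 0 \<Longrightarrow> circle_ball c \<rho> = {}"
  unfolding circle_ball_def by force

lemma open_circle_ball: "open (circle_ball c \<rho>)"
proof -
  have "circle_ball c \<rho> = (\<Union>n::int. {c - of_int n - \<rho> <..< c - of_int n + \<rho>})"
    unfolding circle_ball_def by (auto simp: abs_less_iff algebra_simps)
  then show ?thesis
    by (simp add: open_UN)
qed

lemma circle_ball_borel [measurable]: "circle_ball c \<rho> \<in> sets borel"
  by (simp add: open_circle_ball)

lemma A1_circle_borel [measurable]: "A1_circle q c \<rho> \<in> sets borel"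
  unfolding A1_circle_def by measurable

lemma add_mem_circle_ball_iff:
  "y + s \<in> circle_ball c \<rho> \<longleftrightarrow> y \<in> circle_ball (c - s) \<rho>"
  unfolding circle_ball_def by (simp add: algebra_simps)

lemma add_of_int_mem_circle_ball_iff [simp]:
  "y + of_int k \<in> circle_ball c \<rho> \<longleftrightarrow> y \<in> circle_ball c \<rho>"
proof
  assume "y + of_int k \<in> circle_ball c \<rho>"
  then obtain n :: int where "\<bar>y + of_int k + of_int n - c\<bar> < \<rho>"
    unfolding circle_ball_def by blast
  then show "y \<in> circle_ball c \<rho>"
    unfolding circle_ball_def by (intro CollectI exI[of _ "k + n"]) (simp add: add.assoc)
next
  assume "y \<in> circle_ball c \<rho>"
  then obtain n :: int where "\<bar>y + of_int n - c\<bar> < \<rho>"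
    unfolding circle_ball_def by blast
  then show "y + of_int k \<in> circle_ball c \<rho>"
    unfolding circle_ball_def by (intro CollectI exI[of _ "n - k"]) simp
qed

lemma uminus_mem_circle_ball_iff:
  "- y \<in> circle_ball c \<rho> \<longleftrightarrow> y \<in> circle_ball (- c) \<rho>"
proof
  assume "- y \<in> circle_ball c \<rho>"
  then obtain n :: int where "\<bar>- y + of_int n - c\<bar> < \<rho>"
    unfolding circle_ball_def by blast
  then show "y \<in> circle_ball (- c) \<rho>"
    unfolding circle_ball_def by (intro CollectI exI[of _ "- n"]) (simp add: abs_minus_commute)
next
  assume "y \<in> circle_ball (- c) \<rho>"
  then obtain n :: int where "\<bar>y + of_int n + c\<bar> < \<rho>"
    unfolding circle_ball_def by auto
  then show "- y \<in> circle_ball c \<rho>"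
    unfolding circle_ball_def by (intro CollectI exI[of _ "- n"]) (simp add: abs_minus_commute)
qed

lemma A1_circle_uminus: "A1_circle (- q) (- c) \<rho> = A1_circle q c \<rho>"
  using uminus_mem_circle_ball_iff[of "of_int q * t" "- c" \<rho> for t]
  unfolding A1_circle_def by simp

lemma torus_ball_eq_vector_box:
  "torus_ball c \<rho> = {y. \<forall>i. y $ i \<in> circle_ball (c $ i) \<rho>}"
proof (intro set_eqI iffI)
  fix y assume "y \<in> torus_ball c \<rho>"
  then obtain p where "int_vec p" and p: "\<And>i. \<bar>y $ i + p $ i - c $ i\<bar> < \<rho>"
    unfolding torus_ball_def by auto
  show "y \<in> {y. \<forall>i. y $ i \<in> circle_ball (c $ i) \<rho>}"
  proof (intro CollectI allI)
    fix i
    obtain n where "p $ i = of_int n"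
      using \<open>int_vec p\<close> unfolding int_vec_def by (blast elim: Ints_cases)
    with p[of i] show "y $ i \<in> circle_ball (c $ i) \<rho>"
      unfolding circle_ball_def by auto
  qed
next
  fix y assume "y \<in> {y. \<forall>i. y $ i \<in> circle_ball (c $ i) \<rho>}"
  then have "\<forall>i. \<exists>n::int. \<bar>y $ i + of_int n - c $ i\<bar> < \<rho>"
    unfolding circle_ball_def by blast
  then obtain n where n: "\<And>i. \<bar>y $ i + of_int (n i) - c $ i\<bar> < \<rho>"
    by (auto dest!: choice)
  show "y \<in> torus_ball c \<rho>"
    unfolding torus_ball_def
    by (intro CollectI exI[of _ "\<chi> i. of_int (n i)"]) (simp add: n int_vec_def)
qed

lemma A1_torus_ball: "A1 q (torus_ball c \<rho>) = {x. \<forall>i. x $ i \<in> A1_circle q (c $ i) \<rho>}"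
proof -
  have shift: "of_int q * x $ i + p $ i \<in> circle_ball (c $ i) \<rho>
      \<longleftrightarrow> of_int q * x $ i \<in> circle_ball (c $ i) \<rho>"
    if "int_vec p" for p :: "real ^ 'a" and x i
  proof -
    obtain n where "p $ i = of_int n"
      using \<open>int_vec p\<close> unfolding int_vec_def by (blast elim: Ints_cases)
    then show ?thesis
      by simp
  qed
  have "int_vec (0 :: real ^ 'a)"
    by (simp add: int_vec_def)
  then show ?thesis
    unfolding A1_def A1_circle_def torus_ball_eq_vector_box by (auto simp: shift)
qed

lemma enn2real_prod: "enn2real (prod f A) = (\<Prod>a\<in>A. enn2real (f a))"
  by (induction A rule: infinite_finite_induct) (simp_all add: enn2real_mult)

lemma emeasure_lborel_vector_box:
  fixes S :: "'n::finite \<Rightarrow> real set"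
  assumes [measurable]: "\<And>i. S i \<in> sets borel"
  shows "emeasure lborel {x::real^'n. \<forall>i. x $ i \<in> S i} = (\<Prod>i\<in>UNIV. emeasure lborel (S i))"
proof -
  have Basis_vec: "(Basis :: (real^'n) set) = (\<lambda>i. axis i 1) ` UNIV"
    unfolding Basis_vec_def by auto
  have inj: "inj (\<lambda>i::'n. axis i (1::real))"
    by (auto simp: inj_on_def axis_eq_axis)
  have prod_Basis: "(\<Prod>b\<in>(Basis :: (real^'n) set). g b) = (\<Prod>i\<in>UNIV. g (axis i 1))"
    for g :: "real^'n \<Rightarrow> ennreal"
    unfolding Basis_vec by (simp add: prod.reindex[OF inj])
  have box_indicator: "indicator {x::real^'n. \<forall>i. x $ i \<in> S i} x
      = (\<Prod>b\<in>Basis. indicator (S (axis_index b)) (x \<bullet> b) :: ennreal)" for x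
  proof -
    have "indicator {x::real^'n. \<forall>i. x $ i \<in> S i} x = (\<Prod>i\<in>UNIV. indicator (S i) (x $ i) :: ennreal)"
      by (simp add: indicator_def)
    then show ?thesis
      by (simp add: prod_Basis cart_eq_inner_axis)
  qed
  have "{x::real^'n. \<forall>i. x $ i \<in> S i} \<in> sets lborel"
    by measurable
  then have "emeasure lborel {x::real^'n. \<forall>i. x $ i \<in> S i}
      = (\<integral>\<^sup>+x. indicator {x::real^'n. \<forall>i. x $ i \<in> S i} x \<partial>lborel)"
    by simp
  also have "\<dots> = (\<integral>\<^sup>+x. (\<Prod>b\<in>Basis. indicator (S (axis_index b)) ((x::real^'n) \<bullet> b)) \<partial>lborel)"
    by (simp only: box_indicator)
  also have "\<dots> = (\<Prod>b\<in>(Basis :: (real^'n) set). emeasure lborel (S (axis_index b)))"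
    by (subst nn_integral_lborel_prod) auto
  also have "\<dots> = (\<Prod>i\<in>UNIV. emeasure lborel (S i))"
    by (simp add: prod_Basis)
  finally show ?thesis .
qed

lemma measure_lebesgue_vector_box:
  fixes S :: "'n::finite \<Rightarrow> real set"
  assumes [measurable]: "\<And>i. S i \<in> sets borel"
  shows "measure lebesgue {x::real^'n. \<forall>i. x $ i \<in> S i} = (\<Prod>i\<in>UNIV. measure lborel (S i))"
proof -
  have "{x::real^'n. \<forall>i. x $ i \<in> S i} \<in> sets lborel"
    by measurable
  then show ?thesis
    by (simp add: measure_def emeasure_lborel_vector_box enn2real_prod)
qed

lemma nn_integral_lborel_translate:
  fixes f :: "real \<Rightarrow> ennreal"
  assumes [measurable]: "f \<in> borel_measurable borel"
  shows "(\<integral>\<^sup>+x. f x \<partial>lborel) = (\<integral>\<^sup>+x. f (x + t) \<partial>lborel)"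
  using nn_integral_real_affine[OF assms, of 1 t] by (simp add: add.commute)

lemma nn_integral_unit_interval_periodic_shift:
  fixes h :: "real \<Rightarrow> ennreal"
  assumes [measurable]: "h \<in> borel_measurable borel"
    and periodic: "\<And>x k. h (x + of_int k) = h x"
  shows "(\<integral>\<^sup>+x. indicator {0..<1} x * h (x + s) \<partial>lborel)
    = (\<integral>\<^sup>+x. indicator {0..<1} x * h x \<partial>lborel)"
proof -
  define f where "f = s - of_int \<lfloor>s\<rfloor>"
  have f: "0 \<le> f" "f < 1"
    unfolding f_def by linarith+
  have "h (x + s) = h (x + f)" for x
    using periodic[of "x + f" "\<lfloor>s\<rfloor>"] by (simp add: f_def)
  then have "(\<integral>\<^sup>+x. indicator {0..<1} x * h (x + s) \<partial>lborel)
      = (\<integral>\<^sup>+y. indicator {0..<1} (y - f) * h y \<partial>lborel)"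
    by (subst nn_integral_lborel_translate[of _ f]) auto
  also have "\<dots> = (\<integral>\<^sup>+y. indicator {f..<1} y * h y \<partial>lborel)
      + (\<integral>\<^sup>+y. indicator {1..<1 + f} y * h y \<partial>lborel)"
    using f by (subst nn_integral_add[symmetric])
      (auto intro!: nn_integral_cong simp: indicator_def)
  also have "(\<integral>\<^sup>+y. indicator {1..<1 + f} y * h y \<partial>lborel)
      = (\<integral>\<^sup>+y. indicator {0..<f} y * h y \<partial>lborel)"
    using periodic[of _ 1] by (subst nn_integral_lborel_translate[of _ 1])
      (auto intro!: nn_integral_cong simp: indicator_def)
  also have "(\<integral>\<^sup>+y. indicator {f..<1} y * h y \<partial>lborel) + (\<integral>\<^sup>+y. indicator {0..<f} y * h y \<partial>lborel)
      = (\<integral>\<^sup>+x. indicator {0..<1} x * h x \<partial>lborel)"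
    using f by (subst nn_integral_add[symmetric])
      (auto intro!: nn_integral_cong simp: indicator_def)
  finally show ?thesis .
qed

lemma nn_integral_split_unit_intervals:
  fixes f :: "real \<Rightarrow> ennreal"
  assumes [measurable]: "f \<in> borel_measurable borel"
  shows "(\<integral>\<^sup>+y. indicator {0..<of_int q} y * f y \<partial>lborel)
    = (\<integral>\<^sup>+x. indicator {0..<1} x * (\<Sum>j\<in>{0..<q}. f (x + of_int j)) \<partial>lborel)"
proof -
  have unit_intervals: "indicator {0..<of_int q} y
      = (\<Sum>j\<in>{0..<q}. indicator {of_int j..<of_int j + 1} y :: ennreal)" for y :: real
  proof -
    have "(\<Sum>j\<in>{0..<q}. indicator {of_int j..<of_int j + 1} y :: ennreal)
        = (\<Sum>j\<in>{0..<q}. if \<lfloor>y\<rfloor> = j then 1 else 0)"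
      using floor_unique[of _ y] by (intro sum.cong refl) (auto simp: indicator_def)
    also have "\<dots> = indicator {0..<of_int q} y"
      by (auto simp: indicator_def floor_less_iff le_floor_iff)
    finally show ?thesis ..
  qed
  have "(\<integral>\<^sup>+y. indicator {0..<of_int q} y * f y \<partial>lborel)
      = (\<Sum>j\<in>{0..<q}. \<integral>\<^sup>+y. indicator {of_int j..<of_int j + 1} y * f y \<partial>lborel)"
    unfolding unit_intervals sum_distrib_right by (rule nn_integral_sum) auto
  also have "\<dots> = (\<Sum>j\<in>{0..<q}. \<integral>\<^sup>+x. indicator {0..<1} x * f (x + of_int j) \<partial>lborel)"
  proof (intro sum.cong refl)
    fix j
    show "(\<integral>\<^sup>+y. indicator {of_int j..<of_int j + 1} y * f y \<partial>lborel)
        = (\<integral>\<^sup>+x. indicator {0..<1} x * f (x + of_int j) \<partial>lborel)"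
      by (subst nn_integral_lborel_translate[of _ "of_int j"])
        (auto intro!: nn_integral_cong simp: indicator_def)
  qed
  also have "\<dots> = (\<integral>\<^sup>+x. indicator {0..<1} x * (\<Sum>j\<in>{0..<q}. f (x + of_int j)) \<partial>lborel)"
    unfolding sum_distrib_left by (rule nn_integral_sum[symmetric]) auto
  finally show ?thesis .
qed

lemma nn_integral_unit_interval_dilate:
  fixes f :: "real \<Rightarrow> ennreal"
  assumes [measurable]: "f \<in> borel_measurable borel" and "c > 0"
  shows "ennreal c * (\<integral>\<^sup>+t. indicator {0..1} t * f (c * t) \<partial>lborel)
    = (\<integral>\<^sup>+y. indicator {0..<c} y * f y \<partial>lborel)"
proof -
  have "(\<integral>\<^sup>+y. indicator {0..<c} y * f y \<partial>lborel) = (\<integral>\<^sup>+y. indicator {0..c} y * f y \<partial>lborel)"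
    using AE_lborel_singleton[of c]
    by (intro nn_integral_cong_AE) (auto elim!: eventually_mono simp: indicator_def)
  also have "\<dots> = ennreal c * (\<integral>\<^sup>+t. indicator {0..c} (0 + c * t) * f (0 + c * t) \<partial>lborel)"
    using \<open>c > 0\<close> by (subst nn_integral_real_affine[of _ c 0]) auto
  also have "\<dots> = ennreal c * (\<integral>\<^sup>+t. indicator {0..1} t * f (c * t) \<partial>lborel)"
    using \<open>c > 0\<close> by (auto simp: indicator_def zero_le_mult_iff intro!: nn_integral_cong)
  finally show ?thesis ..
qed

lemma emeasure_circle_ball:
  "emeasure lborel ({0..<1} \<inter> circle_ball c \<rho>) = ennreal (circle_ball_length \<rho>)"
proof -
  have "emeasure lborel ({0..<1} \<inter> circle_ball c \<rho>)
      = (\<integral>\<^sup>+x. indicator {0..<1} x * indicator (circle_ball c \<rho>) (x + (c - 1/2)) \<partial>lborel)"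
    by (subst nn_integral_unit_interval_periodic_shift)
      (auto simp: indicator_inter_arith indicator_def[of "circle_ball c \<rho>"]
        simp flip: nn_integral_indicator)
  also have "\<dots> = emeasure lborel ({0..<1} \<inter> circle_ball (1/2) \<rho>)"
    by (simp add: indicator_def[of "circle_ball _ _"] add_mem_circle_ball_iff indicator_inter_arith
        flip: nn_integral_indicator)
  also have "\<dots> = ennreal (circle_ball_length \<rho>)"
  proof (cases "\<rho> \<le> 1/2")
    case True
    have "{0..<1} \<inter> circle_ball (1/2) \<rho> = {1/2 - \<rho> <..< 1/2 + \<rho>}"
    proof (intro set_eqI iffI)
      fix x assume "x \<in> {0..<1} \<inter> circle_ball (1/2) \<rho>"
      then obtain n :: int where "0 \<le> x" "x < 1" "\<bar>x + of_int n - 1/2\<bar> < \<rho>"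
        unfolding circle_ball_def by auto
      moreover from this have "n = 0"
        using True by (auto simp: abs_less_iff)
      ultimately show "x \<in> {1/2 - \<rho> <..< 1/2 + \<rho>}"
        by auto
    next
      fix x assume "x \<in> {1/2 - \<rho> <..< 1/2 + \<rho>}"
      then show "x \<in> {0..<1} \<inter> circle_ball (1/2) \<rho>"
        using True unfolding circle_ball_def by (auto intro!: exI[of _ 0])
    qed
    then show ?thesis
      using True by (simp add: circle_ball_length_def)
  next
    case False
    then have "{0..<1} \<inter> circle_ball (1/2) \<rho> = {0..<1}"
      unfolding circle_ball_def by (auto intro!: exI[of _ 0])
    then show ?thesis
      using False by (simp add: circle_ball_length_def)
  qed
  finally show ?thesis .
qed

lemma torus_measure_torus_ball:
  fixes c :: "real ^ 'm"
  shows "torus_measure (torus_ball c \<rho>) = circle_ball_length \<rho> ^ CARD('m)"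
proof -
  have "torus_ball c \<rho> \<inter> {x. \<forall>i. 0 \<le> x $ i \<and> x $ i < 1}
      = {x. \<forall>i. x $ i \<in> {0..<1} \<inter> circle_ball (c $ i) \<rho>}"
    by (auto simp: torus_ball_eq_vector_box)
  then have "torus_measure (torus_ball c \<rho>)
      = (\<Prod>i\<in>UNIV. measure lborel ({0..<1} \<inter> circle_ball (c $ i) \<rho>))"
    unfolding torus_measure_def by (simp only:) (rule measure_lebesgue_vector_box, simp)
  then show ?thesis
    by (simp add: measure_def emeasure_circle_ball circle_ball_length_nonneg)
qed

lemma card_floor_ceiling_interval_le:
  fixes a b :: real
  assumes "a \<le> b"
  shows "real (card {\<lfloor>a\<rfloor> <..< \<lceil>b\<rceil>}) \<le> b - a + 1"
proof -
  have "real (card {\<lfloor>a\<rfloor> <..< \<lceil>b\<rceil>}) = real (nat (\<lceil>b\<rceil> - (\<lfloor>a\<rfloor> + 1)))"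
    by simp
  also have "\<dots> \<le> b - a + 1"
    using assms ceiling_correct[of b] floor_correct[of a] by linarith
  finally show ?thesis .
qed

lemma div_mem_atLeastLessThan_int:
  fixes j q g :: int
  assumes "q > 0" and "j \<in> {0..<q * g}"
  shows "j div q \<in> {0..<g}"
proof -
  have "q * (j div q) \<le> j"
    using mult_div_mod_eq[of q j] pos_mod_sign[OF \<open>q > 0\<close>, of j] by linarith
  also have "j < q * g"
    using assms by simp
  finally show ?thesis
    using assms by (simp add: pos_imp_zdiv_nonneg_iff mult_less_cancel_left_pos)
qed

lemma inj_on_coprime_residue_div:
  fixes r q :: int
  assumes "coprime r q"
  shows "inj_on (\<lambda>j. (r * j + n j * q, j div q)) A"
proof (rule inj_onI)
  fix j j' assume eq: "(r * j + n j * q, j div q) = (r * j' + n j' * q, j' div q)"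
  then have "r * (j - j') = q * (n j' - n j)"
    by (simp add: algebra_simps)
  then have "q dvd j - j'"
    using assms by (metis coprime_commute coprime_dvd_mult_right_iff dvd_triv_left)
  then have "j mod q = j' mod q"
    by (simp add: mod_eq_dvd_iff)
  with eq show "j = j'"
    by (metis div_mult_mod_eq prod.inject)
qed

lemma card_residues_in_interval_le:
  fixes q r :: int and a b :: real
  assumes q: "q > 0" and "a \<le> b" and A: "A \<subseteq> {0..<q}"
    and hit: "\<And>j. j \<in> A \<Longrightarrow> \<exists>n::int. a < of_int (r * j + n * q) \<and> of_int (r * j + n * q) < b"
  shows "real (card A) \<le> b - a + of_int (gcd r q)"
proof -
  define g where "g = gcd r q"
  have g: "g > 0"
    using q by (simp add: g_def)
  obtain r' q' where rg: "r = r' * g" and qg: "q = q' * g" and coprime: "coprime r' q'"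
    using gcd_coprime_exists[of r q] g unfolding g_def by auto
  have q': "q' > 0"
    using q g qg by (simp add: zero_less_mult_iff)
  have "\<forall>j\<in>A. \<exists>n::int. a < of_int (r * j + n * q) \<and> of_int (r * j + n * q) < b"
    using hit by blast
  then obtain n where n: "\<And>j. j \<in> A \<Longrightarrow> a < of_int (r * j + n j * q) \<and> of_int (r * j + n j * q) < b"
    by metis
  define I where "I = {\<lfloor>a / of_int g\<rfloor> <..< \<lceil>b / of_int g\<rceil>}"
  have "(\<lambda>j. (r' * j + n j * q', j div q')) ` A \<subseteq> I \<times> {0..<g}"
  proof (rule image_subsetI)
    fix j assume "j \<in> A"
    have "real_of_int (r * j + n j * q) = of_int g * of_int (r' * j + n j * q')"
      by (simp add: rg qg algebra_simps)
    with n[OF \<open>j \<in> A\<close>] g have "r' * j + n j * q' \<in> I"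
      by (simp add: I_def floor_less_iff less_ceiling_iff field_simps)
    moreover have "j div q' \<in> {0..<g}"
      using \<open>j \<in> A\<close> A q' qg by (intro div_mem_atLeastLessThan_int) auto
    ultimately show "(r' * j + n j * q', j div q') \<in> I \<times> {0..<g}"
      by simp
  qed
  then have "card A \<le> card (I \<times> {0..<g})"
    by (intro card_inj_on_le[OF inj_on_coprime_residue_div[OF coprime]]) (simp_all add: I_def)
  then have "real (card A) \<le> real (card I * nat g)"
    by (simp only: of_nat_le_iff card_cartesian_product card_atLeastLessThan_int diff_zero)
  also have "\<dots> = real (card I) * of_int g"
    using g by simp
  also have "\<dots> \<le> (b / of_int g - a / of_int g + 1) * of_int g"
    using g \<open>a \<le> b\<close> unfolding I_def
    by (intro mult_right_mono card_floor_ceiling_interval_le) (auto simp: divide_right_mono)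
  also have "\<dots> = b - a + of_int g"
    using g by (simp add: field_simps)
  finally show ?thesis
    unfolding g_def .
qed

lemma card_circle_ball_hits_le:
  fixes q r :: int and z c \<rho> :: real
  assumes q: "q > 0" and r: "r \<noteq> 0" and \<rho>: "\<rho> \<ge> 0"
  shows "real (card {j\<in>{0..<q}. z + of_int r * of_int j / of_int q \<in> circle_ball c \<rho>})
    \<le> 2 * \<rho> * of_int q + of_int (gcd r q)"
proof -
  have "\<exists>n::int. of_int q * (c - z - \<rho>) < of_int (r * j + n * q)
      \<and> of_int (r * j + n * q) < of_int q * (c - z + \<rho>)"
    if hit: "z + of_int r * of_int j / of_int q \<in> circle_ball c \<rho>" for j
  proof -
    obtain n :: int where "\<bar>z + of_int r * of_int j / of_int q + of_int n - c\<bar> < \<rho>"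
      using hit unfolding circle_ball_def by blast
    then have "\<bar>z + of_int (r * j + n * q) / of_int q - c\<bar> < \<rho>"
      using q by (simp add: add_divide_distrib)
    then show ?thesis
      using q by (intro exI[of _ n]) (simp add: abs_less_iff field_simps)
  qed
  then have "real (card {j\<in>{0..<q}. z + of_int r * of_int j / of_int q \<in> circle_ball c \<rho>})
      \<le> of_int q * (c - z + \<rho>) - of_int q * (c - z - \<rho>) + of_int (gcd r q)"
    using q \<rho> by (intro card_residues_in_interval_le[OF q]) auto
  then show ?thesis
    by (simp add: algebra_simps)
qed

lemma card_circle_ball_hits_le_length:
  fixes q r :: int and z c \<rho> :: real
  assumes "q > 0" and "r \<noteq> 0"
  shows "real (card {j\<in>{0..<q}. z + of_int r * of_int j / of_int q \<in> circle_ball c \<rho>})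
    \<le> of_int q * circle_ball_length \<rho> + of_int (gcd r q)"
proof -
  define N where "N = real (card {j\<in>{0..<q}. z + of_int r * of_int j / of_int q \<in> circle_ball c \<rho>})"
  have "card {j\<in>{0..<q}. z + of_int r * of_int j / of_int q \<in> circle_ball c \<rho>} \<le> card {0..<q}"
    by (rule card_mono) auto
  then have le_q: "N \<le> of_int q"
    using assms unfolding N_def by simp
  have gcd: "real_of_int (gcd r q) \<ge> 0"
    by simp
  consider "\<rho> \<le> 0" | "0 < \<rho>" "2 * \<rho> \<le> 1" | "1 < 2 * \<rho>"
    by linarith
  then show ?thesis
  proof cases
    case 1
    then show ?thesis
      using circle_ball_empty[OF 1] gcd by (simp add: circle_ball_length_def)
  next
    case 2
    then show ?thesis
      using card_circle_ball_hits_le[OF assms, of \<rho> z c] unfolding N_def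
      by (simp add: circle_ball_length_def algebra_simps)
  next
    case 3
    then have "circle_ball_length \<rho> = 1"
      by (simp add: circle_ball_length_def)
    then show ?thesis
      using le_q gcd unfolding N_def by (simp only: mult_1_right)
  qed
qed

lemma sum_indicator_circle_ball_le:
  fixes q r :: int
  assumes "q > 0" and "r \<noteq> 0"
  shows "(\<Sum>j\<in>{0..<q}. indicator (circle_ball c \<rho>) (of_int r * (x + of_int j) / of_int q) :: ennreal)
    \<le> ennreal (of_int q * circle_ball_length \<rho> + of_int (gcd r q))"
proof -
  define z where "z = of_int r * x / of_int q"
  have "(\<Sum>j\<in>{0..<q}. indicator (circle_ball c \<rho>) (of_int r * (x + of_int j) / of_int q) :: ennreal)
      = of_nat (card {j\<in>{0..<q}. z + of_int r * of_int j / of_int q \<in> circle_ball c \<rho>})"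
    unfolding indicator_def z_def by (simp add: Int_def distrib_left add_divide_distrib)
  also have "\<dots> \<le> ennreal (of_int q * circle_ball_length \<rho> + of_int (gcd r q))"
    using card_circle_ball_hits_le_length[OF assms, of z c \<rho>]
    by (simp add: ennreal_of_nat_eq_real_of_nat ennreal_leI)
  finally show ?thesis .
qed

lemma emeasure_dilated_circle_balls_le:
  fixes q r :: int
  assumes q: "q > 0" and r: "r \<noteq> 0"
  shows "ennreal (of_int q) * emeasure lborel (A1_circle r c1 \<rho>1 \<inter> A1_circle q c2 \<rho>2)
    \<le> ennreal ((of_int q * circle_ball_length \<rho>1 + of_int (gcd r q)) * circle_ball_length \<rho>2)"
proof -
  define S where "S = A1_circle r c1 \<rho>1 \<inter> A1_circle q c2 \<rho>2"
  define f :: "real \<Rightarrow> ennreal"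
    where "f y = indicator (circle_ball c2 \<rho>2) y
      * indicator (circle_ball c1 \<rho>1) (of_int r * y / of_int q)"
    for y
  define bound where "bound = of_int q * circle_ball_length \<rho>1 + of_int (gcd r q)"
  have [measurable]: "f \<in> borel_measurable borel" "S \<in> sets borel"
    unfolding f_def S_def by measurable
  have bound: "bound \<ge> 0"
    using q circle_ball_length_nonneg[of \<rho>1] by (simp add: bound_def)
  have "emeasure lborel S = (\<integral>\<^sup>+t. indicator {0..1} t * f (of_int q * t) \<partial>lborel)"
    using q by (auto simp: S_def A1_circle_def f_def indicator_def intro!: nn_integral_cong
        simp flip: nn_integral_indicator)
  then have "ennreal (of_int q) * emeasure lborel S
      = (\<integral>\<^sup>+y. indicator {0..<of_int q} y * f y \<partial>lborel)"
    using q by (simp add: nn_integral_unit_interval_dilate)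
  also have "\<dots> = (\<integral>\<^sup>+x. indicator {0..<1} x * (\<Sum>j\<in>{0..<q}. f (x + of_int j)) \<partial>lborel)"
    by (rule nn_integral_split_unit_intervals) simp
  also have "\<dots> \<le> (\<integral>\<^sup>+x. ennreal bound * indicator ({0..<1} \<inter> circle_ball c2 \<rho>2) x \<partial>lborel)"
  proof (intro nn_integral_mono)
    fix x :: real
    have "(\<Sum>j\<in>{0..<q}. f (x + of_int j)) = indicator (circle_ball c2 \<rho>2) x
        * (\<Sum>j\<in>{0..<q}. indicator (circle_ball c1 \<rho>1) (of_int r * (x + of_int j) / of_int q))"
      unfolding f_def sum_distrib_left by (intro sum.cong refl) (simp add: indicator_def)
    also have "\<dots> \<le> indicator (circle_ball c2 \<rho>2) x * ennreal bound"
      unfolding bound_def by (intro mult_left_mono sum_indicator_circle_ball_le q r) simp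
    finally show "indicator {0..<1} x * (\<Sum>j\<in>{0..<q}. f (x + of_int j))
        \<le> ennreal bound * indicator ({0..<1} \<inter> circle_ball c2 \<rho>2) x"
      by (auto simp: indicator_def mult.commute)
  qed
  also have "\<dots> = ennreal (bound * circle_ball_length \<rho>2)"
    using bound circle_ball_length_nonneg[of \<rho>2]
    by (simp add: nn_integral_cmult_indicator emeasure_circle_ball ennreal_mult)
  finally show ?thesis
    unfolding S_def bound_def .
qed

lemma measure_dilated_circle_balls_le:
  fixes q r :: int
  assumes q: "q \<noteq> 0" and r: "r \<noteq> 0"
  shows "measure lborel (A1_circle r c1 \<rho>1 \<inter> A1_circle q c2 \<rho>2)
    \<le> (circle_ball_length \<rho>1 + of_int (gcd r q) / \<bar>of_int q\<bar>) * circle_ball_length \<rho>2"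
proof -
  have pos: "measure lborel (A1_circle r c1 \<rho>1 \<inter> A1_circle q c2 \<rho>2)
    \<le> (circle_ball_length \<rho>1 + of_int (gcd r q) / of_int q) * circle_ball_length \<rho>2"
    if q: "q > 0" for q and c2
  proof -
    define S where "S = A1_circle r c1 \<rho>1 \<inter> A1_circle q c2 \<rho>2"
    have "emeasure lborel S < \<infinity>"
      by (rule le_less_trans[OF emeasure_mono[of S "{0..1}"]]) (auto simp: S_def A1_circle_def)
    then have "ennreal (of_int q * measure lborel S)
        \<le> ennreal ((of_int q * circle_ball_length \<rho>1 + of_int (gcd r q)) * circle_ball_length \<rho>2)"
      using emeasure_dilated_circle_balls_le[OF q r, of c1 \<rho>1 c2 \<rho>2] q
      by (simp add: S_def emeasure_eq_ennreal_measure ennreal_mult)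
    then have "of_int q * measure lborel S
        \<le> (of_int q * circle_ball_length \<rho>1 + of_int (gcd r q)) * circle_ball_length \<rho>2"
      using q circle_ball_length_nonneg[of \<rho>1] circle_ball_length_nonneg[of \<rho>2]
      by (subst (asm) ennreal_le_iff) auto
    then show ?thesis
      using q unfolding S_def by (simp add: field_simps)
  qed
  show ?thesis
  proof (cases "q > 0")
    case True
    then show ?thesis
      using pos by simp
  next
    case False
    then show ?thesis
      using pos[of "- q" "- c2"] q by (simp add: A1_circle_uminus)
  qed
qed

lemma power_add_le_two_power_mult:
  fixes a b :: real
  assumes "a \<ge> 0" and "b \<ge> 0"
  shows "(a + b) ^ n \<le> 2 ^ n * (a ^ n + b ^ n)"
proof -
  have "(a + b) ^ n \<le> (2 * max a b) ^ n"
    by (rule power_mono) (use assms in auto)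
  also have "\<dots> = 2 ^ n * max a b ^ n"
    by (simp add: power_mult_distrib)
  also have "\<dots> \<le> 2 ^ n * (a ^ n + b ^ n)"
    using assms by (auto simp: max_def intro!: mult_left_mono)
  finally show ?thesis .
qed

theorem mainTheorem10:
  fixes c1 c2 :: "real ^ 'm" and \<rho>1 \<rho>2 :: real and r q :: int
  assumes "r \<noteq> 0" and "q \<noteq> 0"
  shows "measure lebesgue (A1 r (torus_ball c1 \<rho>1) \<inter> A1 q (torus_ball c2 \<rho>2))
    \<le> 2 ^ CARD('m) * (torus_measure (torus_ball c1 \<rho>1) * torus_measure (torus_ball c2 \<rho>2)
        + torus_measure (torus_ball c2 \<rho>2) * (1 / \<bar>real_of_int q\<bar> ^ CARD('m))
          * real_of_int (gcd r q) ^ CARD('m))"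
proof -
  define t :: real where "t = of_int (gcd r q) / \<bar>of_int q\<bar>"
  define S where "S i = A1_circle r (c1 $ i) \<rho>1 \<inter> A1_circle q (c2 $ i) \<rho>2" for i
  have "S i \<in> sets borel" for i
    unfolding S_def by measurable
  moreover have "A1 r (torus_ball c1 \<rho>1) \<inter> A1 q (torus_ball c2 \<rho>2) = {x. \<forall>i. x $ i \<in> S i}"
    by (auto simp: A1_torus_ball S_def)
  ultimately have "measure lebesgue (A1 r (torus_ball c1 \<rho>1) \<inter> A1 q (torus_ball c2 \<rho>2))
      = (\<Prod>i\<in>UNIV. measure lborel (S i))"
    by (simp only: measure_lebesgue_vector_box)
  also have "\<dots> \<le> (\<Prod>i\<in>(UNIV :: 'm set). (circle_ball_length \<rho>1 + t) * circle_ball_length \<rho>2)"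
    using measure_dilated_circle_balls_le[OF assms(2,1)]
    by (intro prod_mono) (simp add: S_def t_def)
  also have "\<dots> = (circle_ball_length \<rho>1 + t) ^ CARD('m) * circle_ball_length \<rho>2 ^ CARD('m)"
    by (simp add: power_mult_distrib)
  also have "\<dots> \<le> 2 ^ CARD('m) * (circle_ball_length \<rho>1 ^ CARD('m) + t ^ CARD('m))
      * circle_ball_length \<rho>2 ^ CARD('m)"
    using circle_ball_length_nonneg
    by (intro mult_right_mono power_add_le_two_power_mult) (simp_all add: t_def)
  finally show ?thesis
    by (simp add: torus_measure_torus_ball t_def power_divide algebra_simps)
qed

end
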